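(* Fix two disjoint sets of vertices $S_1,S_2\subseteq V_n$. Let $T$ be a uniformly random spanning tree of $K_n$. Then the random graphs $H_1 = \left(S_1, E(T)\cap \binom{S_1}{2}\right)$ and $H_2 = \left(S_2, E(T)\cap \binom{S_2}{2}\right)$ are independent.
   Context: $K_n$ is the complete graph on vertex set $V_n=\{v_1,\dots,v_n\}$; $\binom{S}{2}$ denotes the set of 2-element subsets of $S$. *)

theory Defs
  imports "HOL-Probability.Probability"
begin

definition Vn :: "nat \<Rightarrow> nat set" where
  "Vn n = {1..n}"

definition pairs :: "'a set \<Rightarrow> 'a set set" where
  "pairs S = {e. \<exists>u v. u \<in> S \<and> v \<in> S \<and> u \<noteq> v \<and> e = {u, v}}"

definition reach :: "'a set set \<Rightarrow> 'a \<Rightarrow> 'a \<Rightarrow> bool" where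
  "reach E = (\<lambda>u v. {u, v} \<in> E)\<^sup>*\<^sup>*"

text \<open>E is (the edge set of) a spanning tree of the complete graph on V:
  a subgraph that is connected on V and acyclic (no edge lies on a cycle,
  i.e. removing any edge disconnects its endpoints).\<close>
definition is_spanning_tree :: "'a set \<Rightarrow> 'a set set \<Rightarrow> bool" where
  "is_spanning_tree V E \<longleftrightarrow>
     E \<subseteq> pairs V \<and>
     (\<forall>u\<in>V. \<forall>v\<in>V. reach E u v) \<and>
     (\<forall>e\<in>E. \<forall>u v. e = {u, v} \<longrightarrow> \<not> reach (E - {e}) u v)"

definition spanning_trees :: "nat \<Rightarrow> nat set set set" where
  "spanning_trees n = {E. is_spanning_tree (Vn n) E}"

definition UST :: "nat \<Rightarrow> nat set set pmf" where
  "UST n = pmf_of_set (spanning_trees n)"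

end

theory Submission
  imports Defs
begin

text \<open>
  Root each spanning tree of K_n at one of its n vertices. A rooted spanning tree containing
  an edge set F induces an orientation of F towards the root, i.e. a rooted forest whose edges
  are F, and it is a rooted tree extending that forest. A rooted forest with k + 1 roots on
  n vertices has exactly n^k tree extensions (a generalised Cayley formula), so
  n \<cdot> #{T. F \<subseteq> T} = #orientations(F) \<cdot> n^(n - |F| - 1).
  If A and B are edge sets on disjoint vertex sets, the orientations of A \<union> B are exactly the
  pairs of orientations of A and of B, and the powers of n cancel: P(A \<union> B \<subseteq> T) =
  P(A \<subseteq> T) \<cdot> P(B \<subseteq> T). These containment events form \<inter>-stable generators of the
  \<sigma>-algebras generated by H_1 and H_2, so H_1 and H_2 are independent.
\<close>

section \<open>Parent forests and their tree extensions\<close>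

definition parent_rel :: "('a \<rightharpoonup> 'a) \<Rightarrow> ('a \<times> 'a) set" where
  "parent_rel p = {(y, x). p x = Some y}"

text \<open>A rooted forest on V in parent-pointer form: p x is the parent of x and the roots are the
  vertices of V outside dom p; well-foundedness of the parent relation excludes cycles.\<close>
definition parent_forest :: "'a set \<Rightarrow> ('a \<rightharpoonup> 'a) \<Rightarrow> bool" where
  "parent_forest V p \<longleftrightarrow> dom p \<subseteq> V \<and> ran p \<subseteq> V \<and> wf (parent_rel p)"

definition parent_tree :: "'a set \<Rightarrow> ('a \<rightharpoonup> 'a) \<Rightarrow> bool" where
  "parent_tree V p \<longleftrightarrow> parent_forest V p \<and> card (V - dom p) = 1"

definition tree_extensions :: "'a set \<Rightarrow> ('a \<rightharpoonup> 'a) \<Rightarrow> ('a \<rightharpoonup> 'a) set" where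
  "tree_extensions V p = {q. parent_tree V q \<and> p \<subseteq>\<^sub>m q}"

definition descendants :: "('a \<rightharpoonup> 'a) \<Rightarrow> 'a \<Rightarrow> 'a set" where
  "descendants p r = {x. (r, x) \<in> (parent_rel p)\<^sup>*}"

lemma map_le_SomeD: "f \<subseteq>\<^sub>m g \<Longrightarrow> f x = Some y \<Longrightarrow> g x = Some y"
  unfolding map_le_def by (metis domI)

lemma map_le_implies_ran_le:
  assumes "f \<subseteq>\<^sub>m g"
  shows "ran f \<subseteq> ran g"
proof
  fix y assume "y \<in> ran f"
  then obtain x where "f x = Some y" by (auto simp: ran_def)
  then show "y \<in> ran g" using map_le_SomeD[OF assms] by (blast intro: ranI)
qed

lemma finite_maps_on:
  assumes "finite V"
  shows "finite {m. dom m \<subseteq> V \<and> ran m \<subseteq> V}"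
proof -
  have "{m. dom m \<subseteq> V \<and> ran m \<subseteq> V} = (\<Union>A\<in>Pow V. {m. dom m = A \<and> ran m \<subseteq> V})"
    by auto
  also have "finite \<dots>"
    using assms by (intro finite_UN_I) (auto intro: finite_set_of_finite_maps finite_subset)
  finally show ?thesis .
qed

lemma finite_tree_extensions: "finite V \<Longrightarrow> finite (tree_extensions V p)"
  by (rule finite_subset[OF _ finite_maps_on])
    (auto simp: tree_extensions_def parent_tree_def parent_forest_def)

lemma parent_rel_mono: "p \<subseteq>\<^sub>m q \<Longrightarrow> parent_rel p \<subseteq> parent_rel q"
  by (auto simp: parent_rel_def map_le_def dom_def)

lemma parent_rel_upd: "p r = None \<Longrightarrow> parent_rel (p(r \<mapsto> v)) = insert (v, r) (parent_rel p)"
  by (auto simp: parent_rel_def)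

lemma parent_rel_irrefl: "wf (parent_rel p) \<Longrightarrow> p x = Some y \<Longrightarrow> x \<noteq> y"
  using wf_not_refl[of "parent_rel p" x] by (auto simp: parent_rel_def)

lemma parent_rel_asym: "wf (parent_rel p) \<Longrightarrow> p x = Some y \<Longrightarrow> p y \<noteq> Some x"
  using wf_not_sym[of "parent_rel p" y x] by (auto simp: parent_rel_def)

lemma parent_not_descendant:
  assumes "wf (parent_rel p)" "p x = Some y"
  shows "y \<notin> descendants p x"
proof
  assume "y \<in> descendants p x"
  then have "(x, y) \<in> (parent_rel p)\<^sup>*" by (simp add: descendants_def)
  moreover have "(y, x) \<in> parent_rel p" using assms(2) by (simp add: parent_rel_def)
  ultimately show False using assms(1) by (metis insert_absorb wf_insert)
qed

lemma descendant_in_dom: "x \<in> descendants p r \<Longrightarrow> x = r \<or> x \<in> dom p"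
  unfolding descendants_def by (auto elim: rtranclE simp: parent_rel_def)

lemma descendants_subset: "parent_forest V p \<Longrightarrow> r \<in> V \<Longrightarrow> descendants p r \<subseteq> V"
  by (auto simp: parent_forest_def dest!: descendant_in_dom)

lemma descendants_of_leaf:
  assumes "u \<notin> ran p"
  shows "descendants p u = {u}"
proof -
  have "x = u" if "(u, x) \<in> (parent_rel p)\<^sup>*" for x
    using that
  proof (cases rule: converse_rtranclE)
    case (step c)
    then have "u \<in> ran p" by (auto simp: parent_rel_def ran_def)
    then show ?thesis using assms by contradiction
  qed simp
  then show ?thesis by (auto simp: descendants_def)
qed

lemma root_exists:
  assumes "parent_forest V p" "x \<in> V"
  shows "\<exists>r\<in>V - dom p. x \<in> descendants p r"
proof -
  have "wf (parent_rel p)" using assms(1) by (simp add: parent_forest_def)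
  then show ?thesis using assms(2)
  proof (induction x rule: wf_induct_rule)
    case (less x)
    show ?case
    proof (cases "x \<in> dom p")
      case False
      then show ?thesis using less.prems by (auto simp: descendants_def)
    next
      case True
      then obtain y where y: "p x = Some y" by auto
      then have "y \<in> V" using assms(1) by (auto simp: parent_forest_def ran_def)
      moreover have yx: "(y, x) \<in> parent_rel p" using y by (simp add: parent_rel_def)
      ultimately obtain r where "r \<in> V - dom p" "y \<in> descendants p r" using less.IH by blast
      then show ?thesis using yx by (auto simp: descendants_def intro: rtrancl_into_rtrancl)
    qed
  qed
qed

lemma root_unique:
  assumes "x \<in> descendants p a" "a \<notin> dom p" "x \<in> descendants p b" "b \<notin> dom p"
  shows "a = b"
  using assms(1,3) unfolding descendants_def mem_Collect_eq
proof (induction rule: rtrancl_induct)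
  case base
  then show ?case using assms(2) by (cases rule: rtranclE) (auto simp: parent_rel_def)
next
  case (step y z)
  from step.prems show ?case
  proof (cases rule: rtranclE)
    case base
    then show ?thesis using step.hyps(2) assms(4) by (auto simp: parent_rel_def)
  next
    case (step c)
    then have "c = y" using \<open>(y, z) \<in> parent_rel p\<close> by (auto simp: parent_rel_def)
    then show ?thesis using step step.IH by blast
  qed
qed

lemma sum_card_descendants:
  assumes "finite V" "parent_forest V p"
  shows "(\<Sum>r\<in>V - dom p. card (descendants p r)) = card V"
proof -
  have "V = (\<Union>r\<in>V - dom p. descendants p r)"
    using root_exists[OF assms(2)] descendants_subset[OF assms(2)] by blast
  moreover have "card (\<Union>r\<in>V - dom p. descendants p r) = (\<Sum>r\<in>V - dom p. card (descendants p r))"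
  proof (rule card_UN_disjoint)
    show "finite (V - dom p)" using assms(1) by simp
    show "\<forall>r\<in>V - dom p. finite (descendants p r)"
      using descendants_subset[OF assms(2)] assms(1) by (meson DiffD1 finite_subset)
    show "\<forall>a\<in>V - dom p. \<forall>b\<in>V - dom p. a \<noteq> b \<longrightarrow> descendants p a \<inter> descendants p b = {}"
      by (blast dest: root_unique)
  qed
  ultimately show ?thesis by simp
qed

lemma sum_card_non_descendants:
  assumes "finite V" "parent_forest V p"
  shows "(\<Sum>r\<in>V - dom p. card (V - descendants p r)) = (card (V - dom p) - 1) * card V"
proof -
  have sub: "descendants p r \<subseteq> V" if "r \<in> V - dom p" for r
    using that descendants_subset[OF assms(2)] by blast
  then have le: "card (descendants p r) \<le> card V" if "r \<in> V - dom p" for r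
    using that card_mono[OF assms(1)] by blast
  have "(\<Sum>r\<in>V - dom p. card (V - descendants p r)) = (\<Sum>r\<in>V - dom p. card V - card (descendants p r))"
    using sub assms(1) by (intro sum.cong refl) (meson card_Diff_subset finite_subset)
  also have "\<dots> = card (V - dom p) * card V - (\<Sum>r\<in>V - dom p. card (descendants p r))"
    using le by (subst sum_subtractf_nat) auto
  also have "\<dots> = (card (V - dom p) - 1) * card V"
    using sum_card_descendants[OF assms] by (simp add: diff_mult_distrib)
  finally show ?thesis .
qed

lemma tree_extensions_of_tree:
  assumes "finite V" "parent_tree V p"
  shows "tree_extensions V p = {p}"
proof -
  have "q = p" if "parent_tree V q" "p \<subseteq>\<^sub>m q" for q
  proof -
    have "dom p \<subseteq> dom q" using \<open>p \<subseteq>\<^sub>m q\<close> by (rule map_le_implies_dom_le)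
    moreover have "card (V - dom q) = card (V - dom p)"
      using that(1) assms(2) by (simp add: parent_tree_def)
    ultimately have "V - dom q = V - dom p"
      using assms(1) by (metis Diff_mono card_subset_eq finite_Diff subset_refl)
    moreover have "dom q \<subseteq> V" "dom p \<subseteq> V"
      using that(1) assms(2) by (auto simp: parent_tree_def parent_forest_def)
    ultimately have "dom q = dom p" by blast
    then have "q \<subseteq>\<^sub>m p" using \<open>p \<subseteq>\<^sub>m q\<close> by (auto simp: map_le_def)
    then show ?thesis using \<open>p \<subseteq>\<^sub>m q\<close> by (rule map_le_antisym)
  qed
  then show ?thesis using assms(2) by (auto simp: tree_extensions_def)
qed

lemma parent_forest_attach:
  assumes "parent_forest V p" "r \<in> V - dom p" "v \<in> V - descendants p r"
  shows "parent_forest V (p(r \<mapsto> v))"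
proof -
  have "parent_rel (p(r \<mapsto> v)) = insert (v, r) (parent_rel p)"
    using assms(2) by (intro parent_rel_upd) auto
  moreover have "(r, v) \<notin> (parent_rel p)\<^sup>*" using assms(3) by (simp add: descendants_def)
  ultimately have "wf (parent_rel (p(r \<mapsto> v)))" using assms(1) by (simp add: parent_forest_def)
  moreover have "ran (p(r \<mapsto> v)) = insert v (ran p)" using assms(2) by (intro ran_map_upd) auto
  ultimately show ?thesis using assms by (simp add: parent_forest_def)
qed

lemma card_roots_in_tree_extension:
  assumes "finite V" "q \<in> tree_extensions V p"
  shows "card ((V - dom p) \<inter> dom q) = card (V - dom p) - 1"
proof -
  have q: "parent_tree V q" "p \<subseteq>\<^sub>m q" using assms(2) by (auto simp: tree_extensions_def)
  then obtain r where r: "V - dom q = {r}" by (auto simp: parent_tree_def card_1_singleton_iff)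
  moreover have "dom p \<subseteq> dom q" using q(2) by (rule map_le_implies_dom_le)
  ultimately have "(V - dom p) \<inter> dom q = (V - dom p) - {r}" "r \<in> V - dom p" by blast+
  then show ?thesis using assms(1) by simp
qed

lemma bij_betw_tree_extensions_attach:
  assumes "parent_forest V p"
  shows "bij_betw (\<lambda>(q, r). ((r, the (q r)), q))
    (SIGMA q:tree_extensions V p. (V - dom p) \<inter> dom q)
    (SIGMA (r, v):(SIGMA r:V - dom p. V - descendants p r). tree_extensions V (p(r \<mapsto> v)))"
proof (rule bij_betwI')
  fix a b assume "a \<in> (SIGMA q:tree_extensions V p. (V - dom p) \<inter> dom q)"
    "b \<in> (SIGMA q:tree_extensions V p. (V - dom p) \<inter> dom q)"
  then show "((\<lambda>(q, r). ((r, the (q r)), q)) a = (\<lambda>(q, r). ((r, the (q r)), q)) b) = (a = b)"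
    by (cases a; cases b) auto
next
  fix a assume "a \<in> (SIGMA q:tree_extensions V p. (V - dom p) \<inter> dom q)"
  then obtain q r v where a: "a = (q, r)" "q \<in> tree_extensions V p" "r \<in> V - dom p" "q r = Some v"
    by auto
  then have q: "parent_tree V q" "p \<subseteq>\<^sub>m q" by (auto simp: tree_extensions_def)
  then have wf: "wf (parent_rel q)" by (simp add: parent_tree_def parent_forest_def)
  have "v \<in> V" using q(1) a(4) by (auto simp: parent_tree_def parent_forest_def ran_def)
  moreover have "v \<notin> descendants p r"
    using parent_not_descendant[OF wf a(4)] rtrancl_mono[OF parent_rel_mono[OF q(2)]]
    by (auto simp: descendants_def)
  moreover have "p(r \<mapsto> v) \<subseteq>\<^sub>m q" using q(2) a(4) by (auto simp: map_le_def)
  ultimately show "(\<lambda>(q, r). ((r, the (q r)), q)) a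
      \<in> (SIGMA (r, v):(SIGMA r:V - dom p. V - descendants p r). tree_extensions V (p(r \<mapsto> v)))"
    using a q by (auto simp: tree_extensions_def)
next
  fix b assume "b \<in> (SIGMA (r, v):(SIGMA r:V - dom p. V - descendants p r). tree_extensions V (p(r \<mapsto> v)))"
  then obtain r v q where b: "b = ((r, v), q)" "r \<in> V - dom p" "parent_tree V q" "p(r \<mapsto> v) \<subseteq>\<^sub>m q"
    by (auto simp: tree_extensions_def)
  have "q r = Some v" using b(4) by (auto simp: map_le_def)
  moreover have "p \<subseteq>\<^sub>m p(r \<mapsto> v)" using b(2) by (auto simp: map_le_def)
  then have "p \<subseteq>\<^sub>m q" using b(4) by (rule map_le_trans)
  ultimately show "\<exists>a\<in>(SIGMA q:tree_extensions V p. (V - dom p) \<inter> dom q).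
      b = (\<lambda>(q, r). ((r, the (q r)), q)) a"
    using b by (intro bexI[of _ "(q, r)"]) (auto simp: tree_extensions_def)
qed

text \<open>Induction on k, double counting through the bijection above: with k + 2 roots, its left
  side has (k + 1) \<cdot> |tree_extensions V p| elements and its right side
  (k + 1) \<cdot> n \<cdot> n^k, because the descendant sets of the roots partition V.\<close>
lemma card_tree_extensions:
  assumes "finite V" "parent_forest V p" "card (V - dom p) = Suc k"
  shows "card (tree_extensions V p) = card V ^ k"
  using assms(2,3)
proof (induction k arbitrary: p)
  case 0
  then show ?case using tree_extensions_of_tree[OF assms(1)] by (simp add: parent_tree_def)
next
  case (Suc k p)
  let ?R = "V - dom p"
  have fin: "finite ?R" using assms(1) by simp
  have card_attached: "card (tree_extensions V (p(r \<mapsto> v))) = card V ^ k"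
    if rv: "r \<in> ?R" "v \<in> V - descendants p r" for r v
  proof -
    have "V - dom (p(r \<mapsto> v)) = ?R - {r}" by auto
    then have "card (V - dom (p(r \<mapsto> v))) = Suc k" using rv(1) Suc.prems(2) fin by simp
    then show ?thesis using Suc.IH parent_forest_attach[OF Suc.prems(1) rv] by blast
  qed
  have "card (tree_extensions V p) * Suc k = (\<Sum>q\<in>tree_extensions V p. card (?R \<inter> dom q))"
    using card_roots_in_tree_extension[OF assms(1)] Suc.prems(2) by simp
  also have "\<dots> = card (SIGMA q:tree_extensions V p. ?R \<inter> dom q)"
    using finite_tree_extensions[OF assms(1)] fin by simp
  also have "\<dots> = card (SIGMA (r, v):(SIGMA r:?R. V - descendants p r). tree_extensions V (p(r \<mapsto> v)))"
    by (rule bij_betw_same_card[OF bij_betw_tree_extensions_attach[OF Suc.prems(1)]])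
  also have "\<dots> = (\<Sum>(r, v)\<in>(SIGMA r:?R. V - descendants p r). card (tree_extensions V (p(r \<mapsto> v))))"
    using fin assms(1) finite_tree_extensions[OF assms(1)]
    by (subst card_SigmaI) (auto simp: prod.case_distrib)
  also have "\<dots> = (\<Sum>(r, v)\<in>(SIGMA r:?R. V - descendants p r). card V ^ k)"
    using card_attached by (intro sum.cong) auto
  also have "\<dots> = (\<Sum>r\<in>?R. card (V - descendants p r)) * card V ^ k"
    using fin assms(1) by simp
  also have "\<dots> = Suc k * card V * card V ^ k"
    using sum_card_non_descendants[OF assms(1) Suc.prems(1)] Suc.prems(2) by simp
  finally have "Suc k * card (tree_extensions V p) = Suc k * card V ^ Suc k"
    by (simp only: ac_simps power_Suc)
  then show ?case by (simp del: mult_Suc)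
qed

section \<open>Parent trees and spanning trees\<close>

definition parent_edges :: "('a \<rightharpoonup> 'a) \<Rightarrow> 'a set set" where
  "parent_edges p = {{x, y} | x y. p x = Some y}"

lemma parent_edgesI: "p x = Some y \<Longrightarrow> {x, y} \<in> parent_edges p"
  unfolding parent_edges_def by blast

lemma parent_edgesE:
  assumes "e \<in> parent_edges p"
  obtains x y where "e = {x, y}" "p x = Some y"
  using assms unfolding parent_edges_def by blast

lemma doubleton_in_pairsD:
  assumes "{x, y} \<in> pairs S"
  shows "x \<in> S \<and> y \<in> S"
proof -
  obtain u v where "u \<in> S" "v \<in> S" "{x, y} = {u, v}" using assms unfolding pairs_def by blast
  then show ?thesis by (metis doubleton_eq_iff)
qed

lemma pairs_mono: "S \<subseteq> S' \<Longrightarrow> pairs S \<subseteq> pairs S'"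
  unfolding pairs_def by blast

lemma pairs_disjoint:
  assumes "S \<inter> S' = {}"
  shows "pairs S \<inter> pairs S' = {}"
proof (rule ccontr)
  assume "pairs S \<inter> pairs S' \<noteq> {}"
  then obtain e where e: "e \<in> pairs S" "e \<in> pairs S'" by blast
  then obtain u v where "e = {u, v}" unfolding pairs_def by blast
  then have "u \<in> S" "u \<in> S'" using e doubleton_in_pairsD[of u v] by auto
  then show False using assms by blast
qed

lemma is_spanning_tree_no_vertices: "is_spanning_tree {} E \<longleftrightarrow> E = {}"
  by (auto simp: is_spanning_tree_def pairs_def)

lemma finite_pairs: "finite V \<Longrightarrow> finite (pairs V)"
  by (rule finite_subset[of _ "Pow V"]) (auto simp: pairs_def)

lemma reach_sym: "reach E u v \<Longrightarrow> reach E v u"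
  unfolding reach_def
proof (induction rule: rtranclp_induct)
  case (step y z)
  then have "{z, y} \<in> E" by (simp add: insert_commute)
  with step.IH show ?case by (meson converse_rtranclp_into_rtranclp)
qed simp

lemma reach_mono: "E \<subseteq> E' \<Longrightarrow> reach E u v \<Longrightarrow> reach E' u v"
  unfolding reach_def by (erule rtranclp_mono[THEN predicate2D, rotated]) auto

lemma reach_edge: "{u, v} \<in> E \<Longrightarrow> reach E u v"
  unfolding reach_def by auto

lemma reach_trans: "reach E u v \<Longrightarrow> reach E v w \<Longrightarrow> reach E u w"
  unfolding reach_def by (rule rtranclp_trans)

lemma reach_crossing_edge:
  assumes "reach E a x" "a \<in> W" "x \<notin> W"
  shows "\<exists>u w. {w, u} \<in> E \<and> w \<in> W \<and> u \<notin> W"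
  using assms unfolding reach_def
proof (induction rule: rtranclp_induct)
  case (step y z)
  then show ?case by (cases "y \<in> W") auto
qed simp

lemma parent_edges_subset_pairs:
  assumes "parent_forest V p"
  shows "parent_edges p \<subseteq> pairs V"
proof
  fix e assume "e \<in> parent_edges p"
  then obtain x y where e: "e = {x, y}" "p x = Some y" by (rule parent_edgesE)
  then have "x \<in> V" "y \<in> V" using assms by (auto simp: parent_forest_def ran_def)
  moreover have "x \<noteq> y" using assms e(2) by (auto simp: parent_forest_def dest: parent_rel_irrefl)
  ultimately show "e \<in> pairs V" using e(1) by (auto simp: pairs_def)
qed

lemma reach_descendant: "x \<in> descendants p r \<Longrightarrow> reach (parent_edges p) x r"
  unfolding descendants_def mem_Collect_eq
proof (induction rule: rtrancl_induct)
  case (step y z)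
  then have "{z, y} \<in> parent_edges p" by (auto simp: parent_rel_def intro: parent_edgesI)
  then show ?case using step.IH by (meson reach_edge reach_trans)
qed (simp add: reach_def)

lemma reach_without_parent_edge:
  assumes "p x = Some y" "reach (parent_edges p - {{x, y}}) x w"
  shows "w \<in> descendants p x"
  using assms(2) unfolding reach_def
proof (induction rule: rtranclp_induct)
  case base
  then show ?case by (simp add: descendants_def)
next
  case (step w w')
  then have e: "{w, w'} \<in> parent_edges p" "{w, w'} \<noteq> {x, y}" by auto
  from e(1) obtain a b where ab: "{w, w'} = {a, b}" "p a = Some b" by (rule parent_edgesE)
  have "a \<noteq> x"
  proof
    assume "a = x"
    then have "b = y" using ab(2) assms(1) by simp
    then show False using e(2) ab(1) \<open>a = x\<close> by simp
  qed
  from ab(1) consider "a = w" "b = w'" | "a = w'" "b = w" by (metis doubleton_eq_iff)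
  then show ?case
  proof cases
    case 1
    from step.IH have "(x, w) \<in> (parent_rel p)\<^sup>*" by (simp add: descendants_def)
    then show ?thesis
    proof (cases rule: rtranclE)
      case base
      then show ?thesis using 1 \<open>a \<noteq> x\<close> by simp
    next
      case (step c)
      then have "c = w'" using 1 ab(2) by (simp add: parent_rel_def)
      then show ?thesis using step by (simp add: descendants_def)
    qed
  next
    case 2
    then have "(w, w') \<in> parent_rel p" using ab(2) by (simp add: parent_rel_def)
    then show ?thesis using step.IH by (auto simp: descendants_def)
  qed
qed

lemma parent_edges_acyclic:
  assumes "wf (parent_rel p)" "e \<in> parent_edges p" "e = {u, v}"
  shows "\<not> reach (parent_edges p - {e}) u v"
proof -
  obtain x y where e: "e = {x, y}" "p x = Some y" using assms(2) by (rule parent_edgesE)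
  have not_xy: "\<not> reach (parent_edges p - {e}) x y"
    unfolding e(1)
    using reach_without_parent_edge[of p x y, OF e(2)] parent_not_descendant[OF assms(1) e(2)]
    by blast
  have "{u, v} = {x, y}" using assms(3) e(1) by simp
  then consider "u = x" "v = y" | "u = y" "v = x" by (metis doubleton_eq_iff)
  then show ?thesis
  proof cases
    case 2
    show ?thesis
    proof
      assume "reach (parent_edges p - {e}) u v"
      then have "reach (parent_edges p - {e}) v u" by (rule reach_sym)
      with 2 not_xy show False by simp
    qed
  qed (use not_xy in simp)
qed

lemma spanning_tree_parent_edges:
  assumes "parent_tree V p"
  shows "is_spanning_tree V (parent_edges p)"
proof -
  have forest: "parent_forest V p" using assms by (simp add: parent_tree_def)
  obtain r where r: "V - dom p = {r}"
    using assms by (auto simp: parent_tree_def card_1_singleton_iff)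
  have to_root: "reach (parent_edges p) x r" if x: "x \<in> V" for x
  proof -
    obtain r' where "r' \<in> V - dom p" "x \<in> descendants p r'"
      using root_exists[OF forest x] by blast
    moreover from this(1) have "r' = r" using r by blast
    ultimately have "x \<in> descendants p r" by simp
    then show ?thesis by (rule reach_descendant)
  qed
  have connected: "\<forall>u\<in>V. \<forall>v\<in>V. reach (parent_edges p) u v"
    using reach_trans[OF to_root reach_sym[OF to_root]] by (intro ballI)
  have "wf (parent_rel p)" using forest by (simp add: parent_forest_def)
  then have acyclic: "\<forall>e\<in>parent_edges p. \<forall>u v. e = {u, v} \<longrightarrow> \<not> reach (parent_edges p - {e}) u v"
    by (intro ballI allI impI) (rule parent_edges_acyclic)
  show ?thesis
    unfolding is_spanning_tree_def
    using parent_edges_subset_pairs[OF forest] connected acyclic by (intro conjI)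
qed

lemma parent_edges_inj:
  assumes "wf (parent_rel p)" "dom p = dom q" "parent_edges p = parent_edges q"
  shows "p = q"
proof
  fix x
  from assms(1) show "p x = q x"
  proof (induction x rule: wf_induct_rule)
    case (less x)
    show ?case
    proof (cases "x \<in> dom p")
      case False
      then show ?thesis using assms(2) by (auto simp: domIff)
    next
      case True
      then obtain y where y: "p x = Some y" by auto
      then have "(y, x) \<in> parent_rel p" by (simp add: parent_rel_def)
      then have IH: "p y = q y" by (rule less.IH)
      have "{x, y} \<in> parent_edges q" using parent_edgesI[of p x y, OF y] assms(3) by simp
      then obtain a b where ab: "{x, y} = {a, b}" "q a = Some b" by (rule parent_edgesE)
      then consider "a = x" "b = y" | "a = y" "b = x" by (metis doubleton_eq_iff)
      then show ?thesis
      proof cases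
        case 2
        then have "p y = Some x" using ab IH by simp
        then show ?thesis using parent_rel_asym[OF assms(1) y] by blast
      qed (use ab y in simp)
    qed
  qed
qed

lemma spanning_tree_reach: "is_spanning_tree V E \<Longrightarrow> u \<in> V \<Longrightarrow> v \<in> V \<Longrightarrow> reach E u v"
  by (simp add: is_spanning_tree_def)

lemma spanning_tree_edge_ends: "is_spanning_tree V E \<Longrightarrow> {u, v} \<in> E \<Longrightarrow> u \<in> V \<and> v \<in> V"
  by (rule doubleton_in_pairsD) (auto simp: is_spanning_tree_def)

lemma spanning_tree_bridge: "is_spanning_tree V E \<Longrightarrow> {u, v} \<in> E \<Longrightarrow> \<not> reach (E - {{u, v}}) u v"
  by (simp add: is_spanning_tree_def)

text \<open>Grow a parent tree inside E from the root r, one crossing edge of E at a time.\<close>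
lemma spanning_tree_grow:
  assumes "is_spanning_tree V E" "r \<in> V" "finite V" "k < card V"
  shows "\<exists>W p. r \<in> W \<and> W \<subseteq> V \<and> card W = Suc k \<and> parent_forest V p \<and>
           dom p = W - {r} \<and> ran p \<subseteq> W \<and> parent_edges p \<subseteq> E"
  using assms(4)
proof (induction k)
  case 0
  have "parent_forest V Map.empty" by (simp add: parent_forest_def parent_rel_def)
  then show ?case
    using assms(2) by (intro exI[of _ "{r}"] exI[of _ Map.empty]) (simp add: parent_edges_def)
next
  case (Suc k)
  then obtain W p where W: "r \<in> W" "W \<subseteq> V" "card W = Suc k" "parent_forest V p"
      "dom p = W - {r}" "ran p \<subseteq> W" "parent_edges p \<subseteq> E"
    by auto
  have "W \<noteq> V" using W(3) Suc.prems by auto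
  then obtain x where x: "x \<in> V" "x \<notin> W" using W(2) by blast
  have "reach E r x" using assms(1,2) x(1) by (rule spanning_tree_reach)
  then obtain u w where uw: "{w, u} \<in> E" "w \<in> W" "u \<notin> W"
    using reach_crossing_edge W(1) x(2) by metis
  have "u \<in> V" using spanning_tree_edge_ends[OF assms(1) uw(1)] by blast
  have pu: "p u = None" using W(5) uw(3) by auto
  have "u \<notin> ran p" using W(6) uw(3) by blast
  then have "w \<notin> descendants p u" using uw(2,3) descendants_of_leaf by fastforce
  moreover have "u \<in> V - dom p" "w \<in> V" using \<open>u \<in> V\<close> pu uw(2) W(2) by auto
  ultimately have "parent_forest V (p(u \<mapsto> w))" using parent_forest_attach[OF W(4)] by blast
  moreover have "card (insert u W) = Suc (Suc k)"
    using W(2,3) uw(3) assms(3) by (simp add: finite_subset)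
  moreover have "dom (p(u \<mapsto> w)) = insert u W - {r}" using W(1,5) uw(3) by auto
  moreover have "ran (p(u \<mapsto> w)) \<subseteq> insert u W" using W(6) pu uw(2) by auto
  moreover have "parent_edges (p(u \<mapsto> w)) \<subseteq> E"
    using W(7) uw(1) pu by (auto simp: parent_edges_def insert_commute)
  moreover have "r \<in> insert u W" "insert u W \<subseteq> V" using W(1,2) \<open>u \<in> V\<close> by auto
  ultimately show ?case by (intro exI[of _ "insert u W"] exI[of _ "p(u \<mapsto> w)"]) blast
qed

lemma spanning_tree_parent_tree:
  assumes "is_spanning_tree V E" "r \<in> V" "finite V"
  shows "\<exists>p. parent_tree V p \<and> dom p = V - {r} \<and> parent_edges p = E"
proof -
  have "card V > 0" using assms(2,3) card_gt_0_iff by blast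
  then have "card V - 1 < card V" by simp
  then obtain W p where W: "r \<in> W" "W \<subseteq> V" "card W = Suc (card V - 1)" "parent_forest V p"
      "dom p = W - {r}" "parent_edges p \<subseteq> E"
    using spanning_tree_grow[OF assms \<open>card V - 1 < card V\<close>] by blast
  then have "W = V" using assms(3) \<open>card V > 0\<close> by (simp add: card_subset_eq)
  then have dom_p: "dom p = V - {r}" using W(5) by simp
  then have tree: "parent_tree V p"
    using W(4) assms(2) by (simp add: parent_tree_def Diff_Diff_Int Int_absorb1)
  have "E \<subseteq> parent_edges p"
  proof
    fix e assume e: "e \<in> E"
    then obtain u v where uv: "e = {u, v}"
      using assms(1) by (auto simp: is_spanning_tree_def pairs_def)
    show "e \<in> parent_edges p"
    proof (rule ccontr)
      assume "e \<notin> parent_edges p"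
      then have "parent_edges p \<subseteq> E - {e}" using W(6) by auto
      moreover have "u \<in> V" "v \<in> V" using spanning_tree_edge_ends[OF assms(1)] e uv by auto
      then have "reach (parent_edges p) u v"
        by (rule spanning_tree_reach[OF spanning_tree_parent_edges[OF tree]])
      ultimately have "reach (E - {e}) u v" by (rule reach_mono)
      then show False using spanning_tree_bridge[OF assms(1)] e uv by blast
    qed
  qed
  then show ?thesis using tree dom_p W(6) by blast
qed

definition trees_containing :: "'a set \<Rightarrow> 'a set set \<Rightarrow> 'a set set set" where
  "trees_containing V F = {E. is_spanning_tree V E \<and> F \<subseteq> E}"

lemma finite_trees_containing: "finite V \<Longrightarrow> finite (trees_containing V F)"
  by (rule finite_subset[of _ "Pow (pairs V)"])
    (auto simp: trees_containing_def is_spanning_tree_def finite_pairs)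

text \<open>Each spanning tree has exactly one parent tree for each choice of root.\<close>
lemma card_parent_trees_containing:
  assumes "finite V"
  shows "card {p. parent_tree V p \<and> F \<subseteq> parent_edges p} = card (trees_containing V F) * card V"
proof -
  let ?A = "{p. parent_tree V p \<and> F \<subseteq> parent_edges p}"
  let ?B = "trees_containing V F \<times> (\<lambda>r. V - {r}) ` V"
  have "bij_betw (\<lambda>p. (parent_edges p, dom p)) ?A ?B"
  proof (rule bij_betwI')
    fix p q assume "p \<in> ?A" "q \<in> ?A"
    then have "wf (parent_rel p)" by (simp add: parent_tree_def parent_forest_def)
    then show "((parent_edges p, dom p) = (parent_edges q, dom q)) = (p = q)"
      using parent_edges_inj[of p q] by auto
  next
    fix p assume p: "p \<in> ?A"
    then obtain r where r: "V - dom p = {r}"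
      by (auto simp: parent_tree_def card_1_singleton_iff)
    moreover have "dom p \<subseteq> V" using p by (simp add: parent_tree_def parent_forest_def)
    ultimately have "dom p = V - {r}" "r \<in> V" by auto
    then show "(parent_edges p, dom p) \<in> ?B"
      using spanning_tree_parent_edges p by (auto simp: trees_containing_def)
  next
    fix b assume "b \<in> ?B"
    then obtain E r where b: "b = (E, V - {r})" "is_spanning_tree V E" "F \<subseteq> E" "r \<in> V"
      by (auto simp: trees_containing_def)
    then obtain p where "parent_tree V p" "dom p = V - {r}" "parent_edges p = E"
      using spanning_tree_parent_tree[OF b(2) b(4) assms] by blast
    then show "\<exists>p\<in>?A. b = (parent_edges p, dom p)" using b by auto
  qed
  moreover have "card ((\<lambda>r. V - {r}) ` V) = card V"
    by (rule card_image) (auto intro: inj_onI)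
  ultimately show ?thesis by (simp add: bij_betw_same_card card_cartesian_product)
qed

section \<open>Counting spanning trees through a forest\<close>

definition orientations :: "'a set \<Rightarrow> 'a set set \<Rightarrow> ('a \<rightharpoonup> 'a) set" where
  "orientations V F = {p. parent_forest V p \<and> parent_edges p = F}"

definition restrict_edges :: "('a \<rightharpoonup> 'a) \<Rightarrow> 'a set set \<Rightarrow> ('a \<rightharpoonup> 'a)" where
  "restrict_edges q F = q |` {x. \<exists>y. q x = Some y \<and> {x, y} \<in> F}"

lemma finite_orientations: "finite V \<Longrightarrow> finite (orientations V F)"
  by (rule finite_subset[OF _ finite_maps_on]) (auto simp: orientations_def parent_forest_def)

lemma orientations_empty: "orientations V {} = {Map.empty}"
proof -
  have "p = Map.empty" if "parent_edges p = {}" for p :: "'a \<rightharpoonup> 'a"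
  proof
    fix x show "p x = None" using that parent_edgesI[of p x] by (cases "p x") auto
  qed
  moreover have "parent_forest V Map.empty" by (simp add: parent_forest_def parent_rel_def)
  ultimately show ?thesis by (auto simp: orientations_def parent_edges_def)
qed

lemma card_parent_edges:
  assumes "wf (parent_rel p)" "finite (dom p)"
  shows "card (parent_edges p) = card (dom p)"
proof -
  have "parent_edges p = (\<lambda>x. {x, the (p x)}) ` dom p"
  proof (intro equalityI subsetI)
    fix e assume "e \<in> parent_edges p"
    then obtain x y where "e = {x, y}" "p x = Some y" by (rule parent_edgesE)
    then show "e \<in> (\<lambda>x. {x, the (p x)}) ` dom p" by force
  next
    fix e assume "e \<in> (\<lambda>x. {x, the (p x)}) ` dom p"
    then obtain x y where "e = {x, y}" "p x = Some y" by auto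
    then show "e \<in> parent_edges p" using parent_edgesI[of p x y] by blast
  qed
  moreover have "inj_on (\<lambda>x. {x, the (p x)}) (dom p)"
  proof (rule inj_onI)
    fix x y assume xy: "x \<in> dom p" "y \<in> dom p" "{x, the (p x)} = {y, the (p y)}"
    show "x = y"
    proof (rule ccontr)
      assume "x \<noteq> y"
      then have "y = the (p x)" "x = the (p y)" using xy(3) by (metis doubleton_eq_iff)+
      then have "p x = Some y" "p y = Some x" using xy(1,2) by auto
      then show False using parent_rel_asym[OF assms(1)] by blast
    qed
  qed
  ultimately show ?thesis by (simp add: card_image)
qed

lemma orientation_card_dom:
  assumes "finite V" "V \<noteq> {}" "p \<in> orientations V F"
  shows "card F = card (dom p)" "card F < card V" "card (V - dom p) = card V - card F"
proof -
  have forest: "parent_forest V p" and edges: "parent_edges p = F"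
    using assms(3) by (auto simp: orientations_def)
  have dom_V: "dom p \<subseteq> V" using forest by (simp add: parent_forest_def)
  then have "finite (dom p)" using assms(1) finite_subset by blast
  then show card_F: "card F = card (dom p)"
    using card_parent_edges forest edges by (auto simp: parent_forest_def)
  show card_diff: "card (V - dom p) = card V - card F"
    using dom_V assms(1) card_F by (simp add: card_Diff_subset finite_subset)
  obtain x where "x \<in> V" using assms(2) by blast
  then have "V - dom p \<noteq> {}" using root_exists[OF forest] by blast
  then have "card (V - dom p) > 0" using assms(1) by (simp add: card_gt_0_iff)
  then show "card F < card V" using card_diff by simp
qed

lemma restrict_edges_le: "restrict_edges q F \<subseteq>\<^sub>m q"
  by (auto simp: restrict_edges_def map_le_def)

lemma parent_edges_restrict_edges:
  assumes "F \<subseteq> parent_edges q"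
  shows "parent_edges (restrict_edges q F) = F"
proof (intro equalityI subsetI)
  fix e assume "e \<in> parent_edges (restrict_edges q F)"
  then obtain x y where "e = {x, y}" "restrict_edges q F x = Some y" by (rule parent_edgesE)
  then show "e \<in> F" by (auto simp: restrict_edges_def restrict_map_def split: if_splits)
next
  fix e assume "e \<in> F"
  then have "e \<in> parent_edges q" using assms by blast
  then obtain x y where "e = {x, y}" "q x = Some y" by (rule parent_edgesE)
  then have "restrict_edges q F x = Some y" using \<open>e \<in> F\<close> by (auto simp: restrict_edges_def)
  then show "e \<in> parent_edges (restrict_edges q F)"
    using \<open>e = {x, y}\<close> parent_edgesI[of "restrict_edges q F" x y] by blast
qed

lemma parent_forest_restrict:
  assumes "parent_forest V p"
  shows "parent_forest V (p |` S)"
proof -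
  have "p |` S \<subseteq>\<^sub>m p" by (auto simp: map_le_def)
  then have "dom (p |` S) \<subseteq> dom p" "ran (p |` S) \<subseteq> ran p" "parent_rel (p |` S) \<subseteq> parent_rel p"
    by (auto simp: parent_rel_mono map_le_implies_dom_le map_le_implies_ran_le)
  then show ?thesis using assms wf_subset by (auto simp: parent_forest_def)
qed

lemma orientation_eq_restrict_edges:
  assumes "p \<in> orientations V F" "p \<subseteq>\<^sub>m q" "wf (parent_rel q)"
  shows "p = restrict_edges q F"
proof
  fix x
  have edges: "parent_edges p = F" using assms(1) by (simp add: orientations_def)
  show "p x = restrict_edges q F x"
  proof (cases "p x")
    case (Some y)
    then have "q x = Some y" by (rule map_le_SomeD[OF assms(2)])
    moreover have "{x, y} \<in> F" using parent_edgesI[of p x y, OF Some] edges by simp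
    ultimately show ?thesis using Some by (auto simp: restrict_edges_def)
  next
    case None
    have "{x, y} \<notin> F" if qx: "q x = Some y" for y
    proof
      assume "{x, y} \<in> F"
      then have "{x, y} \<in> parent_edges p" using edges by simp
      then obtain a b where ab: "{x, y} = {a, b}" "p a = Some b" by (rule parent_edgesE)
      then consider "a = x" "b = y" | "a = y" "b = x" by (metis doubleton_eq_iff)
      then show False
      proof cases
        case 1
        then show False using ab(2) None by simp
      next
        case 2
        then have "q y = Some x" using map_le_SomeD[OF assms(2) ab(2)] by simp
        then show False using parent_rel_asym[OF assms(3) qx] by blast
      qed
    qed
    then show ?thesis using None by (auto simp: restrict_edges_def)
  qed
qed

lemma parent_trees_containing_eq_UN:
  "{q. parent_tree V q \<and> F \<subseteq> parent_edges q} = (\<Union>p\<in>orientations V F. tree_extensions V p)"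
proof (intro equalityI subsetI)
  fix q assume "q \<in> {q. parent_tree V q \<and> F \<subseteq> parent_edges q}"
  then have q: "parent_tree V q" "F \<subseteq> parent_edges q" by auto
  then have "parent_forest V (restrict_edges q F)"
    by (simp add: parent_tree_def restrict_edges_def parent_forest_restrict)
  then have "restrict_edges q F \<in> orientations V F"
    using parent_edges_restrict_edges[OF q(2)] by (simp add: orientations_def)
  moreover have "q \<in> tree_extensions V (restrict_edges q F)"
    using q(1) restrict_edges_le by (simp add: tree_extensions_def)
  ultimately show "q \<in> (\<Union>p\<in>orientations V F. tree_extensions V p)" by blast
next
  fix q assume "q \<in> (\<Union>p\<in>orientations V F. tree_extensions V p)"
  then obtain p where p: "parent_edges p = F" "parent_tree V q" "p \<subseteq>\<^sub>m q"
    by (auto simp: orientations_def tree_extensions_def)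
  have "F \<subseteq> parent_edges q"
  proof
    fix e assume "e \<in> F"
    then have "e \<in> parent_edges p" using p(1) by simp
    then obtain x y where "e = {x, y}" "p x = Some y" by (rule parent_edgesE)
    then show "e \<in> parent_edges q" using map_le_SomeD[OF p(3)] parent_edgesI[of q x y] by blast
  qed
  then show "q \<in> {q. parent_tree V q \<and> F \<subseteq> parent_edges q}" using p(2) by simp
qed

lemma disjoint_tree_extensions:
  assumes "p \<in> orientations V F" "p' \<in> orientations V F" "p \<noteq> p'"
  shows "tree_extensions V p \<inter> tree_extensions V p' = {}"
proof (rule ccontr)
  assume "tree_extensions V p \<inter> tree_extensions V p' \<noteq> {}"
  then obtain q where q: "parent_tree V q" "p \<subseteq>\<^sub>m q" "p' \<subseteq>\<^sub>m q"
    by (auto simp: tree_extensions_def)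
  then have "wf (parent_rel q)" by (simp add: parent_tree_def parent_forest_def)
  then have "p = restrict_edges q F" "p' = restrict_edges q F"
    using orientation_eq_restrict_edges assms(1,2) q(2,3) by blast+
  then show False using assms(3) by simp
qed

text \<open>Count the parent trees containing F in two ways: by their spanning tree and root,
  and by the orientation of F they induce together with its tree extensions.\<close>
theorem card_trees_containing:
  assumes "finite V" "V \<noteq> {}"
  shows "card (trees_containing V F) * card V
    = card (orientations V F) * card V ^ (card V - card F - 1)"
proof -
  have "card (trees_containing V F) * card V = card (\<Union>p\<in>orientations V F. tree_extensions V p)"
    using card_parent_trees_containing[OF assms(1)] parent_trees_containing_eq_UN by metis
  also have "\<dots> = (\<Sum>p\<in>orientations V F. card (tree_extensions V p))"
  proof (rule card_UN_disjoint)
    show "finite (orientations V F)" using finite_orientations[OF assms(1)] .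
    show "\<forall>p\<in>orientations V F. finite (tree_extensions V p)"
      using finite_tree_extensions[OF assms(1)] by blast
    show "\<forall>p\<in>orientations V F. \<forall>p'\<in>orientations V F.
        p \<noteq> p' \<longrightarrow> tree_extensions V p \<inter> tree_extensions V p' = {}"
      using disjoint_tree_extensions by blast
  qed
  also have "\<dots> = (\<Sum>p\<in>orientations V F. card V ^ (card V - card F - 1))"
  proof (intro sum.cong refl)
    fix p assume p: "p \<in> orientations V F"
    have "card (V - dom p) = Suc (card V - card F - 1)"
      using orientation_card_dom(2,3)[OF assms p] by simp
    moreover have "parent_forest V p" using p by (simp add: orientations_def)
    ultimately show "card (tree_extensions V p) = card V ^ (card V - card F - 1)"
      using card_tree_extensions[OF assms(1)] by blast
  qed
  finally show ?thesis by simp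
qed

text \<open>Multiplying by n^|F| removes the truncated exponent n - |F| - 1; if F has no
  orientation, both sides vanish.\<close>
lemma card_trees_containing_normalized:
  assumes "finite V" "V \<noteq> {}"
  shows "card (trees_containing V F) * card V ^ Suc (card F)
    = card (orientations V F) * card V ^ (card V - 1)"
proof (cases "orientations V F = {}")
  case True
  then have "card (trees_containing V F) * card V = 0"
    using card_trees_containing[OF assms, of F] by simp
  then show ?thesis using True assms by simp
next
  case False
  then obtain p where "p \<in> orientations V F" by blast
  then have "card F < card V" by (rule orientation_card_dom(2)[OF assms])
  then have pow: "card V ^ (card V - card F - 1) * card V ^ card F = card V ^ (card V - 1)"
    by (simp flip: power_add)
  have "card (trees_containing V F) * card V ^ Suc (card F)
      = card (trees_containing V F) * card V * card V ^ card F"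
    by (simp only: power_Suc ac_simps)
  also have "\<dots> = card (orientations V F) * (card V ^ (card V - card F - 1) * card V ^ card F)"
    unfolding card_trees_containing[OF assms] by (simp only: ac_simps)
  finally show ?thesis unfolding pow .
qed

lemma parent_edges_subset_pairsD:
  assumes "parent_edges p \<subseteq> pairs S" "p x = Some y"
  shows "x \<in> S" "y \<in> S"
proof -
  have "{x, y} \<in> parent_edges p" using assms(2) by (rule parent_edgesI)
  then have "{x, y} \<in> pairs S" using assms(1) by (rule subsetD[rotated])
  then show "x \<in> S" "y \<in> S" using doubleton_in_pairsD[of x y S] by blast+
qed

lemma map_add_Some_disjoint:
  assumes "dom p \<inter> dom q = {}"
  shows "(p ++ q) x = Some y \<longleftrightarrow> p x = Some y \<or> q x = Some y"
  using assms by (auto simp: map_add_Some_iff dom_def)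

lemma parent_rel_map_add:
  "dom p \<inter> dom q = {} \<Longrightarrow> parent_rel (p ++ q) = parent_rel p \<union> parent_rel q"
  by (auto simp: parent_rel_def map_add_Some_disjoint)

lemma parent_edges_map_add:
  "dom p \<inter> dom q = {} \<Longrightarrow> parent_edges (p ++ q) = parent_edges p \<union> parent_edges q"
  unfolding parent_edges_def by (auto simp: map_add_Some_disjoint)

text \<open>Well-foundedness survives the union because no parent pointer of p leads into the
  vertex set of q.\<close>
lemma parent_forest_map_add:
  assumes "parent_forest V p" "parent_forest V q"
    and "dom p \<union> ran p \<subseteq> S" "dom q \<subseteq> S'" "S \<inter> S' = {}"
  shows "parent_forest V (p ++ q)"
proof -
  have disj: "dom p \<inter> dom q = {}" using assms(3-5) by blast
  have "Domain (parent_rel p) \<subseteq> ran p" "Range (parent_rel q) \<subseteq> dom q"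
    by (auto simp: parent_rel_def ran_def)
  then have "Domain (parent_rel p) \<inter> Range (parent_rel q) = {}" using assms(3-5) by blast
  moreover have "wf (parent_rel p)" "wf (parent_rel q)"
    using assms(1,2) by (simp_all add: parent_forest_def)
  ultimately have "wf (parent_rel (p ++ q))"
    unfolding parent_rel_map_add[OF disj] by (intro wf_Un)
  moreover have "ran (p ++ q) = ran p \<union> ran q" using disj by (rule ran_map_add)
  ultimately show ?thesis using assms(1,2) by (auto simp: parent_forest_def)
qed

lemma parent_edges_restrict:
  assumes "parent_edges p = A \<union> B" "A \<subseteq> pairs S" "B \<subseteq> pairs S'" "S \<inter> S' = {}"
  shows "parent_edges (p |` S) = A"
proof (intro equalityI subsetI)
  fix e assume "e \<in> parent_edges (p |` S)"
  then obtain x y where e: "e = {x, y}" "(p |` S) x = Some y" by (rule parent_edgesE)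
  then have "x \<in> S" "p x = Some y" by (auto simp: restrict_map_def split: if_splits)
  then have "e \<in> A \<union> B" "x \<notin> S'" using assms(1,4) e(1) parent_edgesI[of p x y] by blast+
  moreover have "e \<notin> B" using doubleton_in_pairsD[of x y S'] assms(3) e(1) \<open>x \<notin> S'\<close> by blast
  ultimately show "e \<in> A" by blast
next
  fix e assume e: "e \<in> A"
  then have "e \<in> parent_edges p" using assms(1) by blast
  then obtain x y where xy: "e = {x, y}" "p x = Some y" by (rule parent_edgesE)
  have "x \<in> S" using doubleton_in_pairsD[of x y S] e xy(1) assms(2) by blast
  then have "(p |` S) x = Some y" using xy(2) by simp
  then show "e \<in> parent_edges (p |` S)" using xy(1) parent_edgesI[of "p |` S" x y] by blast
qed

lemma map_add_restrict_eq: "dom p \<subseteq> S \<union> S' \<Longrightarrow> p |` S ++ p |` S' = p"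
  by (auto simp: fun_eq_iff map_add_def restrict_map_def split: option.split)

lemma map_add_restrict_left:
  assumes "dom p \<subseteq> S" "dom q \<inter> S = {}"
  shows "(p ++ q) |` S = p"
proof
  fix x
  show "((p ++ q) |` S) x = p x"
  proof (cases "x \<in> S")
    case True
    then have "q x = None" using assms(2) by blast
    then show ?thesis using True by (simp add: map_add_def)
  next
    case False
    then have "p x = None" using assms(1) by blast
    then show ?thesis using False by simp
  qed
qed

lemma orientation_vertices:
  assumes "p \<in> orientations V F" "F \<subseteq> pairs S"
  shows "dom p \<union> ran p \<subseteq> S"
  using parent_edges_subset_pairsD[of p S] assms by (auto simp: orientations_def ran_def)

lemma orientations_map_add:
  assumes "A \<subseteq> pairs S" "B \<subseteq> pairs S'" "S \<inter> S' = {}"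
    and "p \<in> orientations V A" "q \<in> orientations V B"
  shows "p ++ q \<in> orientations V (A \<union> B)"
proof -
  have "dom p \<union> ran p \<subseteq> S" "dom q \<union> ran q \<subseteq> S'"
    using orientation_vertices assms by blast+
  then have "dom p \<inter> dom q = {}" "parent_forest V (p ++ q)"
    using parent_forest_map_add[of V p q S S'] assms(3-5) by (blast, simp add: orientations_def)
  then show ?thesis using assms(4,5) by (simp add: orientations_def parent_edges_map_add)
qed

lemma orientations_restrict:
  assumes "r \<in> orientations V (A \<union> B)" "A \<subseteq> pairs S" "B \<subseteq> pairs S'" "S \<inter> S' = {}"
  shows "r |` S \<in> orientations V A"
  using assms parent_edges_restrict[of r A B S S'] parent_forest_restrict[of V r S]
  by (simp add: orientations_def)

lemma bij_betw_orientations_Un: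
  assumes "A \<subseteq> pairs S" "B \<subseteq> pairs S'" "S \<inter> S' = {}"
  shows "bij_betw (\<lambda>(p, q). p ++ q) (orientations V A \<times> orientations V B) (orientations V (A \<union> B))"
proof (rule bij_betwI[where g = "\<lambda>r. (r |` S, r |` S')"])
  show "(\<lambda>(p, q). p ++ q) \<in> orientations V A \<times> orientations V B \<rightarrow> orientations V (A \<union> B)"
    using orientations_map_add[OF assms] by auto
  have "S' \<inter> S = {}" using assms(3) by blast
  then show "(\<lambda>r. (r |` S, r |` S')) \<in> orientations V (A \<union> B) \<rightarrow> orientations V A \<times> orientations V B"
    using orientations_restrict[OF _ assms] orientations_restrict[of _ V B A S' S] assms
    by (auto simp: Un_commute)
  show "(\<lambda>r. (r |` S, r |` S')) ((\<lambda>(p, q). p ++ q) x) = x"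
    if x_in: "x \<in> orientations V A \<times> orientations V B" for x
  proof -
    obtain p q where x: "x = (p, q)" "p \<in> orientations V A" "q \<in> orientations V B"
      using x_in by blast
    then have dom: "dom p \<subseteq> S" "dom q \<subseteq> S'" using orientation_vertices assms(1,2) by blast+
    then have disj: "dom p \<inter> dom q = {}" "dom q \<inter> S = {}" "dom p \<inter> S' = {}"
      using assms(3) by blast+
    have "(p ++ q) |` S = p" by (rule map_add_restrict_left[OF dom(1) disj(2)])
    moreover have "(p ++ q) |` S' = q"
      unfolding map_add_comm[OF disj(1)] by (rule map_add_restrict_left[OF dom(2) disj(3)])
    ultimately show ?thesis using x(1) by simp
  qed
  show "(\<lambda>(p, q). p ++ q) ((\<lambda>r. (r |` S, r |` S')) r) = r" if r: "r \<in> orientations V (A \<union> B)" for r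
  proof -
    have "A \<union> B \<subseteq> pairs (S \<union> S')" using assms(1,2) pairs_mono[of _ "S \<union> S'"] by blast
    then have "dom r \<subseteq> S \<union> S'" using orientation_vertices[OF r] by blast
    then show ?thesis by (simp add: map_add_restrict_eq)
  qed
qed

theorem card_trees_containing_Un:
  assumes "finite V" "A \<subseteq> pairs S" "B \<subseteq> pairs S'" "S \<inter> S' = {}" "finite A" "finite B"
  shows "card (trees_containing V (A \<union> B)) * card (trees_containing V {})
    = card (trees_containing V A) * card (trees_containing V B)"
proof (cases "V = {}")
  case True
  then have "trees_containing V F = (if F = {} then {{}} else {})" for F
    by (auto simp: trees_containing_def is_spanning_tree_no_vertices)
  then show ?thesis by simp
next
  case False
  define n where "n = card V"
  let ?t = "\<lambda>F. card (trees_containing V F)" and ?o = "\<lambda>F. card (orientations V F)"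
  have norm: "?t F * n ^ Suc (card F) = ?o F * n ^ (n - 1)" for F
    unfolding n_def by (rule card_trees_containing_normalized[OF assms(1) False])
  have "A \<inter> B = {}" using assms(2-4) pairs_disjoint by blast
  then have "card (A \<union> B) = card A + card B" using assms(5,6) by (simp add: card_Un_disjoint)
  then have pow: "n ^ Suc (card (A \<union> B)) * n ^ Suc (card ({} :: 'a set set)) = n ^ Suc (card A) * n ^ Suc (card B)"
    by (simp flip: power_add)
  have "?t (A \<union> B) * ?t {} * (n ^ Suc (card A) * n ^ Suc (card B))
      = (?t (A \<union> B) * n ^ Suc (card (A \<union> B))) * (?t {} * n ^ Suc (card ({} :: 'a set set)))"
    unfolding pow[symmetric] by (simp only: ac_simps)
  also have "\<dots> = ?o (A \<union> B) * ?o {} * (n ^ (n - 1) * n ^ (n - 1))"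
    unfolding norm by (simp only: ac_simps)
  also have "\<dots> = (?o A * n ^ (n - 1)) * (?o B * n ^ (n - 1))"
    using bij_betw_same_card[OF bij_betw_orientations_Un[OF assms(2-4)]]
    by (simp add: card_cartesian_product orientations_empty ac_simps)
  also have "\<dots> = ?t A * ?t B * (n ^ Suc (card A) * n ^ Suc (card B))"
    unfolding norm[symmetric] by (simp only: ac_simps)
  finally show ?thesis using False assms(1) by (simp add: n_def)
qed

section \<open>Independence\<close>

lemma (in prob_space) indep_set_mono:
  "indep_set A B \<Longrightarrow> A' \<subseteq> A \<Longrightarrow> B' \<subseteq> B \<Longrightarrow> indep_set A' B'"
  unfolding indep_set_def by (rule indep_sets_mono_sets) (auto split: bool.split)

definition containment_events :: "'a set \<Rightarrow> 'a set set set" where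
  "containment_events P = {{T. a \<subseteq> T} | a. a \<subseteq> P}"

lemma Int_stable_containment_events: "Int_stable (containment_events P)"
proof (rule Int_stableI)
  fix A B assume "A \<in> containment_events P" "B \<in> containment_events P"
  then obtain a b where "A = {T. a \<subseteq> T}" "B = {T. b \<subseteq> T}" "a \<subseteq> P" "b \<subseteq> P"
    by (auto simp: containment_events_def)
  then have "A \<inter> B = {T. a \<union> b \<subseteq> T}" "a \<union> b \<subseteq> P" by auto
  then show "A \<inter> B \<in> containment_events P" unfolding containment_events_def by blast
qed

text \<open>For finite P, the event that T \<inter> P equals a given c is a Boolean combination of
  finitely many containment events, by inclusion-exclusion.\<close>
lemma restriction_event_in_sigma_sets:
  assumes "finite P"
  shows "{T. f (T \<inter> P) \<in> A} \<in> sigma_sets UNIV (containment_events P)"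
proof -
  interpret sa: sigma_algebra UNIV "sigma_sets UNIV (containment_events P)"
    by (rule sigma_algebra_sigma_sets) simp
  have basic: "{T. a \<subseteq> T} \<in> sigma_sets UNIV (containment_events P)" if "a \<subseteq> P" for a
    using that by (intro sigma_sets.Basic) (auto simp: containment_events_def)
  have exact: "{T. T \<inter> P = c} \<in> sigma_sets UNIV (containment_events P)" if c: "c \<subseteq> P" for c
  proof -
    have "{T. T \<inter> P = c} = {T. c \<subseteq> T} - (\<Union>e\<in>P - c. {T. insert e c \<subseteq> T})"
      using c by blast
    moreover have "(\<Union>e\<in>P - c. {T. insert e c \<subseteq> T}) \<in> sigma_sets UNIV (containment_events P)"
      using assms c by (intro sa.finite_UN basic) auto
    ultimately show ?thesis using basic[OF c] by (simp add: sa.Diff)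
  qed
  have "{T. f (T \<inter> P) \<in> A} = (\<Union>c\<in>{c. c \<subseteq> P \<and> f c \<in> A}. {T. T \<inter> P = c})" by auto
  moreover have "finite {c. c \<subseteq> P \<and> f c \<in> A}" using assms by simp
  ultimately show ?thesis using exact by auto
qed

lemma indep_var_restrictions:
  fixes M :: "'a set measure"
  assumes "prob_space M" "space M = UNIV" "sets M = UNIV" "finite P" "finite Q"
    and prod: "\<And>a b. a \<subseteq> P \<Longrightarrow> b \<subseteq> Q \<Longrightarrow> measure M {T. a \<union> b \<subseteq> T}
      = measure M {T. a \<subseteq> T} * measure M {T. b \<subseteq> T}"
  shows "prob_space.indep_var M
    (count_space UNIV) (\<lambda>T. f (T \<inter> P)) (count_space UNIV) (\<lambda>T. g (T \<inter> Q))"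
proof -
  interpret prob_space M by (rule assms(1))
  have "indep_set (containment_events P) (containment_events Q)"
    unfolding indep_sets2_eq
  proof (intro conjI ballI)
    fix A B assume "A \<in> containment_events P" "B \<in> containment_events Q"
    then obtain a b where "A = {T. a \<subseteq> T}" "B = {T. b \<subseteq> T}" "a \<subseteq> P" "b \<subseteq> Q"
      by (auto simp: containment_events_def)
    moreover have "{T. a \<subseteq> T} \<inter> {T. b \<subseteq> T} = {T. a \<union> b \<subseteq> T}" by blast
    ultimately show "prob (A \<inter> B) = prob A * prob B" using prod by simp
  qed (simp_all add: assms(3))
  then have "indep_set (sigma_sets UNIV (containment_events P)) (sigma_sets UNIV (containment_events Q))"
    using indep_set_sigma_sets Int_stable_containment_events assms(2) by metis
  moreover have "sigma_sets UNIV {(\<lambda>T. f (T \<inter> P)) -` A \<inter> UNIV | A. A \<in> sets (count_space UNIV)}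
      \<subseteq> sigma_sets UNIV (containment_events P)"
    using restriction_event_in_sigma_sets[OF assms(4)] by (intro sigma_sets_mono) (auto simp: vimage_def)
  moreover have "sigma_sets UNIV {(\<lambda>T. g (T \<inter> Q)) -` A \<inter> UNIV | A. A \<in> sets (count_space UNIV)}
      \<subseteq> sigma_sets UNIV (containment_events Q)"
    using restriction_event_in_sigma_sets[OF assms(5)] by (intro sigma_sets_mono) (auto simp: vimage_def)
  ultimately show ?thesis
    unfolding indep_var_eq using assms(2,3) by (auto intro: indep_set_mono simp: measurable_def)
qed

lemma trees_containing_nonempty:
  assumes "finite V"
  shows "trees_containing V {} \<noteq> {}"
proof (cases "V = {}")
  case True
  then show ?thesis by (auto simp: trees_containing_def is_spanning_tree_no_vertices)
next
  case False
  then have "card (trees_containing V {}) * card V = card V ^ (card V - 1)"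
    using card_trees_containing[OF assms False, of "{}"] by (simp add: orientations_empty)
  moreover have "card V > 0" using assms False by (simp add: card_gt_0_iff)
  ultimately show ?thesis by (metis card.empty mult_0 power_not_zero zero_less_iff_neq_zero)
qed

lemma measure_UST_containing:
  "measure_pmf.prob (UST n) {T. F \<subseteq> T}
    = card (trees_containing (Vn n) F) / card (trees_containing (Vn n) {})"
proof -
  have fin: "finite (Vn n)" by (simp add: Vn_def)
  have "UST n = pmf_of_set (trees_containing (Vn n) {})"
    by (simp add: UST_def spanning_trees_def trees_containing_def)
  moreover have "trees_containing (Vn n) {} \<inter> {T. F \<subseteq> T} = trees_containing (Vn n) F"
    by (auto simp: trees_containing_def)
  ultimately show ?thesis
    using measure_pmf_of_set[OF trees_containing_nonempty[OF fin] finite_trees_containing[OF fin]]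
    by simp
qed

lemma measure_UST_containing_Un:
  assumes "S \<subseteq> Vn n" "S' \<subseteq> Vn n" "S \<inter> S' = {}" "A \<subseteq> pairs S" "B \<subseteq> pairs S'"
  shows "measure_pmf.prob (UST n) {T. A \<union> B \<subseteq> T}
    = measure_pmf.prob (UST n) {T. A \<subseteq> T} * measure_pmf.prob (UST n) {T. B \<subseteq> T}"
proof -
  have "finite (Vn n)" by (simp add: Vn_def)
  then have "finite (pairs S)" "finite (pairs S')"
    using assms(1,2) finite_pairs finite_subset by blast+
  then have "finite A" "finite B" using assms(4,5) finite_subset by blast+
  then have "card (trees_containing (Vn n) (A \<union> B)) * card (trees_containing (Vn n) {})
      = card (trees_containing (Vn n) A) * card (trees_containing (Vn n) B)"
    using card_trees_containing_Un \<open>finite (Vn n)\<close> assms(3-5) by blast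
  moreover have "card (trees_containing (Vn n) {}) > 0"
    using \<open>finite (Vn n)\<close> trees_containing_nonempty finite_trees_containing card_gt_0_iff by blast
  ultimately show ?thesis
    unfolding measure_UST_containing by (simp add: field_simps flip: of_nat_mult)
qed

theorem lemma2p5:
  fixes n :: nat and S1 S2 :: "nat set"
  assumes "S1 \<subseteq> Vn n" and "S2 \<subseteq> Vn n" and "S1 \<inter> S2 = {}"
  shows "prob_space.indep_var (measure_pmf (UST n))
           (count_space UNIV) (\<lambda>T. (S1, T \<inter> pairs S1))
           (count_space UNIV) (\<lambda>T. (S2, T \<inter> pairs S2))"
proof (rule indep_var_restrictions[OF prob_space_measure_pmf])
  show "space (measure_pmf (UST n)) = UNIV" "sets (measure_pmf (UST n)) = UNIV" by simp_all
  have "finite (Vn n)" by (simp add: Vn_def)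
  then show "finite (pairs S1)" "finite (pairs S2)"
    using assms(1,2) finite_pairs finite_subset by blast+
  show "measure_pmf.prob (UST n) {T. a \<union> b \<subseteq> T}
      = measure_pmf.prob (UST n) {T. a \<subseteq> T} * measure_pmf.prob (UST n) {T. b \<subseteq> T}"
    if "a \<subseteq> pairs S1" "b \<subseteq> pairs S2" for a b
    using measure_UST_containing_Un assms that by blast
qed

end
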